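(* Let $c>0$ and let $r\geq1$ be an integer. If $N\geq 1$ and $r-1\leq c\log N$, then $$ \sum_{a\leq N^r}(\tau_r'(a))^2\leq\left(\frac{(1+c)^{r-1}}{(r-1)!}\,N(\log N)^{r-1}\right)^r. $$
   Context: $a$ runs over positive integers. $\tau_r'(a)$ is the number of ways to write $a$ as an ordered product of $r$ positive integers each of which does not exceed $N$. *)

theory Defs
  imports Complex_Main
begin

definition tau_trunc :: "nat \<Rightarrow> nat \<Rightarrow> nat \<Rightarrow> nat" where
  "tau_trunc N r a = card {xs :: nat list. length xs = r \<and> set xs \<subseteq> {1..N} \<and> prod_list xs = a}"

end

theory Submission
  imports Defs
begin

text \<open>
  The sum of squares counts pairs of r-tuples over {1..N} with equal products. Splitting each
  entry of the first tuple into divisors of the entries of the second encodes such a pair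
  injectively as an r-by-r matrix of positive integers whose rows have product at most N, so the
  count is at most D_r(N)^r, where D_r(x) counts r-tuples of positive integers with product at
  most x. Comparing the recursion D_r(x) = sum_{m <= x} D_{r-1}(x/m) with an integral gives
  D_r(x) <= x (ln x + r - 1)^(r-1) / (r-1)!, and r - 1 <= c ln N turns this into the bound.
\<close>

lemma prod_list_map2_times:
  fixes z w :: "'a::comm_monoid_mult list"
  assumes "length z = length w"
  shows "prod_list (map2 (*) z w) = prod_list z * prod_list w"
  using assms by (induction z w rule: list_induct2) (simp_all add: ac_simps)

lemma zero_in_map2_times_iff:
  fixes z w :: "nat list"
  assumes "length z = length w"
  shows "0 \<in> set (map2 (*) z w) \<longleftrightarrow> 0 \<in> set z \<or> 0 \<in> set w"
  using assms by (induction z w rule: list_induct2) auto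

lemma dvd_prod_list_factor:
  fixes d :: nat and y :: "nat list"
  assumes "d dvd prod_list y"
  obtains z w where "length z = length y" "length w = length y"
    "map2 (*) z w = y" "prod_list z = d"
proof -
  have "\<exists>z w. length z = length y \<and> length w = length y \<and> map2 (*) z w = y \<and> prod_list z = d"
    using assms
  proof (induction y arbitrary: d)
    case Nil
    then show ?case by simp
  next
    case (Cons a y)
    then obtain b e where "d = b * e" "b dvd a" "e dvd prod_list y"
      using division_decomp by (metis prod_list.Cons)
    moreover obtain z w where "length z = length y" "length w = length y"
      "map2 (*) z w = y" "prod_list z = e"
      using Cons.IH \<open>e dvd prod_list y\<close> by blast
    moreover have "b * (a div b) = a" using \<open>b dvd a\<close> by simp
    ultimately show ?case
      by (intro exI[of _ "b # z"] exI[of _ "a div b # w"]) simp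
  qed
  then show ?thesis using that by blast
qed

definition prod_bounded_tuples :: "nat \<Rightarrow> real \<Rightarrow> nat list set" where
  "prod_bounded_tuples k x = {z. length z = k \<and> 0 \<notin> set z \<and> real (prod_list z) \<le> x}"

definition equal_prod_pairs :: "nat \<Rightarrow> nat \<Rightarrow> nat \<Rightarrow> (nat list \<times> nat list) set" where
  "equal_prod_pairs N p q = {(x, y). length x = p \<and> set x \<subseteq> {1..N} \<and> length y = q \<and> 0 \<notin> set y
     \<and> prod_list x = prod_list y}"

lemma member_le_prod_list:
  fixes z :: "nat list"
  assumes "0 \<notin> set z" "a \<in> set z"
  shows "a \<le> prod_list z"
  using assms by (metis dvd_imp_le prod_list_dvd prod_list_zero_iff not_gr_zero)

lemma finite_prod_bounded_tuples: "finite (prod_bounded_tuples k x)"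
proof -
  have "a \<le> nat \<lfloor>x\<rfloor>" if "z \<in> prod_bounded_tuples k x" "a \<in> set z" for z a
  proof -
    have "real a \<le> x"
      using that member_le_prod_list[of z a] unfolding prod_bounded_tuples_def
      by (force dest: of_nat_mono)
    then show ?thesis by (simp add: le_nat_floor)
  qed
  then have "prod_bounded_tuples k x \<subseteq> {z. set z \<subseteq> {0..nat \<lfloor>x\<rfloor>} \<and> length z = k}"
    by (auto simp: prod_bounded_tuples_def)
  then show ?thesis
    by (rule finite_subset) (simp add: finite_lists_length_eq)
qed

lemma equal_prod_pairs_0: "equal_prod_pairs N 0 q \<subseteq> {([], replicate q 1)}"
proof
  fix v assume "v \<in> equal_prod_pairs N 0 q"
  then obtain y where v: "v = ([], y)" "length y = q" "prod_list y = 1"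
    unfolding equal_prod_pairs_def by auto
  then have "\<forall>a\<in>set y. a = 1"
    using prod_list_dvd nat_dvd_1_iff_1 by metis
  then have "y = replicate q 1" using v(2) replicate_length_same by metis
  then show "v \<in> {([], replicate q 1)}" using v(1) by simp
qed

lemma equal_prod_pairs_Suc:
  "equal_prod_pairs N (Suc p) q \<subseteq>
     (\<lambda>(z, x, w). (prod_list z # x, map2 (*) z w)) ` (prod_bounded_tuples q N \<times> equal_prod_pairs N p q)"
proof
  fix v assume "v \<in> equal_prod_pairs N (Suc p) q"
  then obtain d x y where v: "v = (d # x, y)" "length x = p" "d \<in> {1..N}" "set x \<subseteq> {1..N}"
      "length y = q" "0 \<notin> set y" "d * prod_list x = prod_list y"
    unfolding equal_prod_pairs_def by (cases v; cases "fst v") auto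
  then have "d dvd prod_list y" by (metis dvd_triv_left)
  then obtain z w where zw: "length z = q" "length w = q" "map2 (*) z w = y" "prod_list z = d"
    using v(5) dvd_prod_list_factor by metis
  then have nonzero: "0 \<notin> set z" "0 \<notin> set w"
    using v(6) zero_in_map2_times_iff[of z w] by auto
  have "d * prod_list x = d * prod_list w"
    using v(7) zw prod_list_map2_times[of z w] by simp
  then have "prod_list x = prod_list w" using v(3) by simp
  then have "(z, x, w) \<in> prod_bounded_tuples q N \<times> equal_prod_pairs N p q"
    using v zw nonzero unfolding prod_bounded_tuples_def equal_prod_pairs_def by auto
  moreover have "v = (prod_list z # x, map2 (*) z w)" using v(1) zw by simp
  ultimately show "v \<in> (\<lambda>(z, x, w). (prod_list z # x, map2 (*) z w)) `
      (prod_bounded_tuples q N \<times> equal_prod_pairs N p q)" by force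
qed

lemma card_equal_prod_pairs_le:
  "finite (equal_prod_pairs N p q) \<and> card (equal_prod_pairs N p q) \<le> card (prod_bounded_tuples q N) ^ p"
proof (induction p)
  case 0
  have "finite (equal_prod_pairs N 0 q)"
    by (rule finite_subset[OF equal_prod_pairs_0]) simp
  moreover have "card (equal_prod_pairs N 0 q) \<le> card {([] :: nat list, replicate q (1::nat))}"
    by (rule card_mono[OF _ equal_prod_pairs_0]) simp
  ultimately show ?case by simp
next
  case (Suc p)
  let ?f = "\<lambda>(z, x, w). (prod_list z # x, map2 (*) z w)"
  let ?B = "prod_bounded_tuples q N \<times> equal_prod_pairs N p q"
  have "finite ?B" using Suc.IH finite_prod_bounded_tuples by blast
  then have fin: "finite (?f ` ?B)" by blast
  have "finite (equal_prod_pairs N (Suc p) q)"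
    by (rule finite_subset[OF equal_prod_pairs_Suc fin])
  moreover have "card (equal_prod_pairs N (Suc p) q) \<le> card (?f ` ?B)"
    by (rule card_mono[OF fin equal_prod_pairs_Suc])
  moreover have "card (?f ` ?B) \<le> card ?B" by (rule card_image_le[OF \<open>finite ?B\<close>])
  moreover have "card ?B \<le> card (prod_bounded_tuples q N) ^ Suc p"
    using Suc.IH by (simp add: card_cartesian_product)
  ultimately show ?case by linarith
qed

lemma prod_bounded_tuples_0: "1 \<le> x \<Longrightarrow> prod_bounded_tuples 0 x = {[]}"
  unfolding prod_bounded_tuples_def by auto

lemma prod_bounded_tuples_Suc:
  "prod_bounded_tuples (Suc k) x = (\<Union>m\<in>{1..nat \<lfloor>x\<rfloor>}. (#) m ` prod_bounded_tuples k (x / m))"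
proof (rule set_eqI, rule iffI)
  fix v assume "v \<in> prod_bounded_tuples (Suc k) x"
  then obtain m z where v: "v = m # z" "length z = k" "m \<noteq> 0" "0 \<notin> set z"
      "real m * real (prod_list z) \<le> x"
    unfolding prod_bounded_tuples_def by (cases v) auto
  have "prod_list z \<ge> 1" using v(4) by (metis less_one not_less prod_list_zero_iff)
  then have "m \<le> m * prod_list z" by simp
  then have "real m \<le> real m * real (prod_list z)" by (metis of_nat_le_iff of_nat_mult)
  then have "real m \<le> x" using v(5) by linarith
  then have "m \<in> {1..nat \<lfloor>x\<rfloor>}" using v(3) by (simp add: le_nat_floor)
  moreover have "real (prod_list z) \<le> x / m" using v(3,5) by (simp add: field_simps)
  ultimately show "v \<in> (\<Union>m\<in>{1..nat \<lfloor>x\<rfloor>}. (#) m ` prod_bounded_tuples k (x / m))"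
    using v unfolding prod_bounded_tuples_def by auto
next
  fix v assume "v \<in> (\<Union>m\<in>{1..nat \<lfloor>x\<rfloor>}. (#) m ` prod_bounded_tuples k (x / m))"
  then obtain m z where v: "v = m # z" "m \<ge> 1" "z \<in> prod_bounded_tuples k (x / m)" by auto
  then have "real m * real (prod_list z) \<le> x"
    unfolding prod_bounded_tuples_def by (simp add: field_simps)
  then show "v \<in> prod_bounded_tuples (Suc k) x"
    using v unfolding prod_bounded_tuples_def by auto
qed

lemma card_prod_bounded_tuples_Suc:
  "card (prod_bounded_tuples (Suc k) x) = (\<Sum>m=1..nat \<lfloor>x\<rfloor>. card (prod_bounded_tuples k (x / m)))"
  unfolding prod_bounded_tuples_Suc
  by (subst card_UN_disjoint) (auto simp: finite_prod_bounded_tuples card_image)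

lemma power_Suc_diff_ge:
  fixes u v :: "'a::linordered_idom"
  assumes "0 \<le> u" "u \<le> v"
  shows "of_nat (Suc n) * (v - u) * u ^ n \<le> v ^ Suc n - u ^ Suc n"
proof (induction n)
  case 0
  then show ?case by simp
next
  case (Suc n)
  have "of_nat (Suc (Suc n)) * (v - u) * u ^ Suc n
      = u * (of_nat (Suc n) * (v - u) * u ^ n) + u ^ Suc n * (v - u)"
    by (simp add: algebra_simps)
  also have "\<dots> \<le> v * (v ^ Suc n - u ^ Suc n) + u ^ Suc n * (v - u)"
    using Suc assms by (intro add_right_mono mult_mono) auto
  also have "\<dots> = v ^ Suc (Suc n) - u ^ Suc (Suc n)"
    by (simp add: algebra_simps)
  finally show ?case .
qed

lemma divide_fact_eq_Suc: "(y::real) / fact j = real (Suc j) * y / fact (Suc j)"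
  by (simp add: fact_Suc field_simps del: of_nat_Suc)

lemma power_div_fact_add_le:
  fixes u :: real
  assumes "0 \<le> u"
  shows "u ^ j / fact j + u ^ Suc j / fact (Suc j) \<le> (u + 1) ^ Suc j / fact (Suc j)"
proof -
  have "u ^ j / fact j + u ^ Suc j / fact (Suc j) = (real (Suc j) * u ^ j + u ^ Suc j) / fact (Suc j)"
    by (subst divide_fact_eq_Suc) (simp add: add_divide_distrib)
  also have "\<dots> \<le> (u + 1) ^ Suc j / fact (Suc j)"
    using power_Suc_diff_ge[of u "u + 1" j] assms by (intro divide_right_mono) auto
  finally show ?thesis .
qed

text \<open>
  Since ln (1 + 1/n) >= 1/(n+1), the term is dominated by the integral of
  x (ln (x/t) + j)^j / (t j!) over [n, n+1], which is x (G n - G (n+1)).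
\<close>
lemma log_power_term_le_diff:
  fixes x :: real and n j :: nat
  assumes "1 \<le> n" "real (Suc n) \<le> x"
  defines "G \<equiv> \<lambda>m::nat. (ln (x / m) + j) ^ Suc j / fact (Suc j)"
  shows "x / Suc n * (ln (x / Suc n) + j) ^ j / fact j \<le> x * (G n - G (Suc n))"
proof -
  define a where "a = ln (x / n) + j"
  define b where "b = ln (x / Suc n) + j"
  have "x > 0" "real n > 0" using assms by auto
  have "b \<ge> 0" unfolding b_def using assms by simp
  have "ln (real n / Suc n) \<le> real n / Suc n - 1"
    using \<open>real n > 0\<close> by (intro ln_le_minus_one) simp
  then have "1 / Suc n \<le> ln (Suc n) - ln n"
    using \<open>real n > 0\<close> by (simp add: ln_div field_simps)
  also have "\<dots> = a - b"
    unfolding a_def b_def using \<open>x > 0\<close> \<open>real n > 0\<close> by (simp add: ln_div)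
  finally have step: "1 / Suc n \<le> a - b" .
  moreover have "0 \<le> 1 / real (Suc n)" by simp
  ultimately have "b \<le> a" by linarith
  have "x / Suc n * b ^ j / fact j = x * (1 / Suc n) * (b ^ j / fact j)" by simp
  also have "\<dots> \<le> x * (a - b) * (b ^ j / fact j)"
    using step \<open>x > 0\<close> \<open>b \<ge> 0\<close> by (intro mult_right_mono mult_left_mono) auto
  also have "\<dots> = x * (real (Suc j) * (a - b) * b ^ j / fact (Suc j))"
    by (subst divide_fact_eq_Suc) (simp add: mult.assoc)
  also have "\<dots> \<le> x * ((a ^ Suc j - b ^ Suc j) / fact (Suc j))"
    using power_Suc_diff_ge[OF \<open>b \<ge> 0\<close> \<open>b \<le> a\<close>, of j] \<open>x > 0\<close>
    by (intro mult_left_mono divide_right_mono) auto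
  also have "\<dots> = x * (G n - G (Suc n))"
    unfolding G_def a_def b_def by (simp add: diff_divide_distrib)
  finally show ?thesis unfolding b_def .
qed

lemma sum_log_power_le:
  fixes x :: real and j :: nat
  assumes "1 \<le> x"
  shows "(\<Sum>m=1..nat \<lfloor>x\<rfloor>. x / m * (ln (x / m) + j) ^ j / fact j)
    \<le> x * ((ln x + j) ^ j / fact j + (ln x + j) ^ Suc j / fact (Suc j))"
proof -
  define F where "F m = x / m * (ln (x / m) + j) ^ j / fact j" for m :: nat
  define G where "G m = (ln (x / m) + j) ^ Suc j / fact (Suc j)" for m :: nat
  have "1 \<le> nat \<lfloor>x\<rfloor>" using assms by linarith
  then obtain M where M: "nat \<lfloor>x\<rfloor> = Suc M" by (cases "nat \<lfloor>x\<rfloor>") auto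
  have "real (Suc M) \<le> x" using assms unfolding M[symmetric] by linarith
  have "(\<Sum>m=1..Suc M. F m) = F 1 + (\<Sum>i=1..M. F (Suc i))"
    by (simp add: sum.atLeast_Suc_atMost sum.shift_bounds_cl_Suc_ivl del: sum.cl_ivl_Suc)
  also have "(\<Sum>i=1..M. F (Suc i)) \<le> (\<Sum>i=1..M. x * (G i - G (Suc i)))"
  proof (rule sum_mono)
    fix i assume "i \<in> {1..M}"
    then show "F (Suc i) \<le> x * (G i - G (Suc i))"
      using \<open>real (Suc M) \<le> x\<close> unfolding F_def G_def
      by (intro log_power_term_le_diff) auto
  qed
  also have "\<dots> = x * (\<Sum>i=1..M. G i - G (Suc i))"
    by (simp add: sum_distrib_left)
  also have "\<dots> = x * (G 1 - G (Suc M))"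
    using sum_Suc_diff[of 1 M "\<lambda>i. - G i"] by simp
  also have "\<dots> \<le> x * G 1"
  proof -
    have "1 \<le> x / Suc M" using \<open>real (Suc M) \<le> x\<close> by simp
    then have "G (Suc M) \<ge> 0" unfolding G_def by simp
    then show ?thesis using assms by (simp add: right_diff_distrib)
  qed
  finally show ?thesis unfolding M F_def G_def by (simp add: algebra_simps)
qed

lemma card_prod_bounded_tuples_le:
  fixes x :: real
  assumes "1 \<le> x"
  shows "real (card (prod_bounded_tuples (Suc j) x)) \<le> x * (ln x + j) ^ j / fact j"
  using assms
proof (induction j arbitrary: x)
  case 0
  have "card (prod_bounded_tuples 0 (x / m)) = 1" if "m \<in> {1..nat \<lfloor>x\<rfloor>}" for m
  proof -
    have "1 \<le> m" "m \<le> nat \<lfloor>x\<rfloor>" using that by auto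
    then have "real m \<le> x" by linarith
    then have "1 \<le> x / m" using \<open>1 \<le> m\<close> by simp
    then show ?thesis by (simp add: prod_bounded_tuples_0)
  qed
  then have "card (prod_bounded_tuples 1 x) = nat \<lfloor>x\<rfloor>"
    unfolding One_nat_def card_prod_bounded_tuples_Suc by simp
  then show ?case using 0 of_nat_floor[of x] by simp
next
  case (Suc j)
  have "real (card (prod_bounded_tuples (Suc (Suc j)) x))
      = (\<Sum>m=1..nat \<lfloor>x\<rfloor>. real (card (prod_bounded_tuples (Suc j) (x / m))))"
    unfolding card_prod_bounded_tuples_Suc by simp
  also have "\<dots> \<le> (\<Sum>m=1..nat \<lfloor>x\<rfloor>. x / m * (ln (x / m) + j) ^ j / fact j)"
  proof (rule sum_mono)
    fix m assume "m \<in> {1..nat \<lfloor>x\<rfloor>}"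
    then have "1 \<le> m" "m \<le> nat \<lfloor>x\<rfloor>" by auto
    then have "real m \<le> x" by linarith
    then have "1 \<le> x / m" using \<open>1 \<le> m\<close> by simp
    then show "real (card (prod_bounded_tuples (Suc j) (x / m))) \<le> x / m * (ln (x / m) + j) ^ j / fact j"
      by (rule Suc.IH)
  qed
  also have "\<dots> \<le> x * ((ln x + j) ^ j / fact j + (ln x + j) ^ Suc j / fact (Suc j))"
    by (rule sum_log_power_le[OF Suc.prems])
  also have "\<dots> \<le> x * ((ln x + Suc j) ^ Suc j / fact (Suc j))"
  proof -
    have "ln x + real j + 1 = ln x + Suc j" by simp
    from power_div_fact_add_le[of "ln x + j" j, unfolded this] Suc.prems
    show ?thesis by (intro mult_left_mono) auto
  qed
  finally show ?case by simp
qed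

lemma sum_tau_trunc_squared_le:
  assumes "finite A"
  shows "(\<Sum>a\<in>A. tau_trunc N r a ^ 2) \<le> card (equal_prod_pairs N r r)"
proof -
  define S where "S a = {xs :: nat list. length xs = r \<and> set xs \<subseteq> {1..N} \<and> prod_list xs = a}" for a
  have "finite (S a)" for a
    by (rule finite_subset[of _ "{xs. set xs \<subseteq> {1..N} \<and> length xs = r}"])
      (auto simp: S_def finite_lists_length_eq)
  then have "(\<Sum>a\<in>A. tau_trunc N r a ^ 2) = card (\<Union>a\<in>A. S a \<times> S a)"
    using assms by (subst card_UN_disjoint)
      (auto simp: tau_trunc_def S_def card_cartesian_product power2_eq_square)
  also have "\<dots> \<le> card (equal_prod_pairs N r r)"
    using card_equal_prod_pairs_le by (intro card_mono) (auto simp: S_def equal_prod_pairs_def)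
  finally show ?thesis .
qed

theorem corollary2p2:
  fixes c :: real and r N :: nat
  assumes "c > 0" and "r \<ge> 1" and "N \<ge> 1"
    and "real (r - 1) \<le> c * ln (real N)"
  shows "(\<Sum>a\<in>{1..N ^ r}. (real (tau_trunc N r a))^2)
           \<le> ((1 + c) ^ (r - 1) / fact (r - 1) * real N * (ln (real N)) ^ (r - 1)) ^ r"
proof -
  obtain j where j: "r = Suc j" using assms(2) by (cases r) auto
  have "0 \<le> ln (real N)" using assms(3) by simp
  have "real (card (prod_bounded_tuples r N)) \<le> real N * (ln N + j) ^ j / fact j"
    unfolding j using assms(3) by (intro card_prod_bounded_tuples_le) simp
  also have "\<dots> \<le> real N * ((1 + c) * ln N) ^ j / fact j"
    using assms(4) j \<open>0 \<le> ln (real N)\<close>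
    by (intro divide_right_mono mult_left_mono power_mono) (auto simp: algebra_simps)
  also have "\<dots> = (1 + c) ^ (r - 1) / fact (r - 1) * real N * (ln (real N)) ^ (r - 1)"
    using j by (simp add: power_mult_distrib)
  finally have count_bound: "real (card (prod_bounded_tuples r N)) ^ r \<le> \<dots> ^ r"
    by (intro power_mono) simp_all
  have "(\<Sum>a\<in>{1..N ^ r}. tau_trunc N r a ^ 2) \<le> card (prod_bounded_tuples r N) ^ r"
    using sum_tau_trunc_squared_le[of "{1..N ^ r}" N r] card_equal_prod_pairs_le[of N r r] by simp
  then have "(\<Sum>a\<in>{1..N ^ r}. (real (tau_trunc N r a))^2) \<le> real (card (prod_bounded_tuples r N)) ^ r"
    unfolding of_nat_power[symmetric] of_nat_sum[symmetric] of_nat_le_iff .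
  with count_bound show ?thesis by linarith
qed

end
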